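(* Let $0\le\gamma\le1$ and let $g\colon\{0,1\}^m\to\{0,1\}^n$ be a $(d,r)$-local function. Then $$\|g(\mathcal{U}^m)-\mathcal{U}^n_\gamma\|\ge 1-2\exp\left\{-\frac{\mathsf{err}(\gamma,d)^2\cdot r}{2}\right\}.$$
   Context: $\mathcal{U}^m$ is uniform on $\{0,1\}^m$; $\mathcal{U}^n_\gamma$ is the product distribution on $\{0,1\}^n$ with each bit independently $1$ with probability $\gamma$. A function $g\colon\{0,1\}^m\to\{0,1\}^n$ is $d$-local if each output bit depends on at most $d$ input bits; for an output index $i$, let $I_g(i)\subseteq[m]$ be the set of input coordinates on which output bit $i$ depends. Output bits $i_1,\dots,i_r$ are non-connected if the sets $I_g(i_1),\dots,I_g(i_r)$ are pairwise disjoint. $g$ is $(d,r)$-local if it is $d$-local and has $r$ non-connected output bits. $\mathsf{err}(\gamma,t)$ is the minimum distance of $\gamma$ to an integer multiple of $2^{-t}$. $\|\cdot\|$ is total variation distance. *)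

theory Defs
  imports "HOL-Analysis.Analysis"
begin

text \<open>Bit strings of length m: functions nat => bool that vanish outside {0..<m}.\<close>
definition cube :: "nat \<Rightarrow> (nat \<Rightarrow> bool) set" where
  "cube m = {x. \<forall>i. m \<le> i \<longrightarrow> \<not> x i}"

definition dep_set :: "nat \<Rightarrow> ((nat \<Rightarrow> bool) \<Rightarrow> (nat \<Rightarrow> bool)) \<Rightarrow> nat \<Rightarrow> nat set" where
  "dep_set m g i = {j. j < m \<and> (\<exists>x\<in>cube m. g x i \<noteq> g (x(j := \<not> x j)) i)}"

definition d_local :: "nat \<Rightarrow> nat \<Rightarrow> ((nat \<Rightarrow> bool) \<Rightarrow> (nat \<Rightarrow> bool)) \<Rightarrow> nat \<Rightarrow> bool" where
  "d_local m n g d = (\<forall>i<n. card (dep_set m g i) \<le> d)"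

definition dr_local :: "nat \<Rightarrow> nat \<Rightarrow> ((nat \<Rightarrow> bool) \<Rightarrow> (nat \<Rightarrow> bool)) \<Rightarrow> nat \<Rightarrow> nat \<Rightarrow> bool" where
  "dr_local m n g d r = (d_local m n g d \<and>
     (\<exists>S. S \<subseteq> {..<n} \<and> card S = r \<and>
          (\<forall>i\<in>S. \<forall>j\<in>S. i \<noteq> j \<longrightarrow> dep_set m g i \<inter> dep_set m g j = {})))"

definition push_unif :: "nat \<Rightarrow> ((nat \<Rightarrow> bool) \<Rightarrow> (nat \<Rightarrow> bool)) \<Rightarrow> (nat \<Rightarrow> bool) \<Rightarrow> real" where
  "push_unif m g y = real (card {x\<in>cube m. g x = y}) / 2 ^ m"

definition biased :: "nat \<Rightarrow> real \<Rightarrow> (nat \<Rightarrow> bool) \<Rightarrow> real" where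
  "biased n \<gamma> y = (\<Prod>i<n. if y i then \<gamma> else 1 - \<gamma>)"

definition tv_dist :: "nat \<Rightarrow> ((nat \<Rightarrow> bool) \<Rightarrow> real) \<Rightarrow> ((nat \<Rightarrow> bool) \<Rightarrow> real) \<Rightarrow> real" where
  "tv_dist n P Q = (1/2) * (\<Sum>y\<in>cube n. \<bar>P y - Q y\<bar>)"

definition err :: "real \<Rightarrow> nat \<Rightarrow> real" where
  "err \<gamma> t = Inf {\<bar>\<gamma> - real_of_int k / 2 ^ t\<bar> | k. True}"

end

theory Submission
  imports Defs "HOL-Probability.Probability"
begin

text \<open>
  Fix r non-connected output bits.  Each depends on at most d fair input bits, so the probability
  that it equals 1 under g(U^m) is a multiple of 2^-d and hence differs from \<gamma> by at least
  \<epsilon> = err(\<gamma>, d).  Orient every bit so that its agreement with a target value \<sigma>_i is more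
  likely under g(U^m) than under U^n_\<gamma>; then the expected numbers of agreements differ by at
  least r\<epsilon>.  The chosen bits are independent under both distributions (under g(U^m) because
  they read disjoint sets of inputs), so by Hoeffding's inequality the event "at least the
  midpoint of the two means agree" has probability at most exp(-\<epsilon>^2 r / 2) under U^n_\<gamma>
  and at least 1 - exp(-\<epsilon>^2 r / 2) under g(U^m).
\<close>

lemma cube_eq_PiE_dflt: "cube m = PiE_dflt {..<m} False (\<lambda>_. UNIV)"
  by (auto simp: cube_def PiE_dflt_def)

lemma finite_cube: "finite (cube m)"
  by (auto simp: cube_eq_PiE_dflt)

lemma card_cube: "card (cube m) = 2 ^ m"
  by (simp add: cube_eq_PiE_dflt card_PiE_dflt)

lemma set_Pi_pmf_subset_cube: "set_pmf (Pi_pmf {..<n} False p) \<subseteq> cube n"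
  using set_Pi_pmf_subset[of "{..<n}" False p] by (auto simp: cube_def)

lemma measure_Pi_pmf_Int_cube:
  "measure (Pi_pmf {..<n} False p) (B \<inter> cube n) = measure (Pi_pmf {..<n} False p) B"
  using set_Pi_pmf_subset_cube
  by (metis (no_types, lifting) inf.absorb_iff2 inf_assoc measure_Int_set_pmf)

definition uniform_cube :: "nat \<Rightarrow> (nat \<Rightarrow> bool) pmf" where
  "uniform_cube m = Pi_pmf {..<m} False (\<lambda>_. bernoulli_pmf (1/2))"

definition biased_cube :: "nat \<Rightarrow> real \<Rightarrow> (nat \<Rightarrow> bool) pmf" where
  "biased_cube n \<gamma> = Pi_pmf {..<n} False (\<lambda>_. bernoulli_pmf \<gamma>)"

lemma fair_coins_eq_pmf_of_set:
  "finite D \<Longrightarrow> Pi_pmf D False (\<lambda>_. bernoulli_pmf (1/2)) = pmf_of_set (PiE_dflt D False (\<lambda>_. UNIV))"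
  by (simp add: bernoulli_pmf_half_conv_pmf_of_set Pi_pmf_of_set)

lemma measure_fair_coins:
  assumes "finite D"
  shows "measure (Pi_pmf D False (\<lambda>_. bernoulli_pmf (1/2))) B
           = real (card (PiE_dflt D False (\<lambda>_. UNIV) \<inter> B)) / 2 ^ card D"
proof -
  let ?C = "PiE_dflt D False (\<lambda>_. UNIV :: bool set)"
  have "?C \<noteq> {}" "finite ?C" using assms by auto
  then have "measure (pmf_of_set ?C) B = real (card (?C \<inter> B)) / card ?C"
    by (rule measure_pmf_of_set)
  then show ?thesis
    using assms by (simp add: fair_coins_eq_pmf_of_set card_PiE_dflt)
qed

lemma uniform_cube_eq_pmf_of_set: "uniform_cube m = pmf_of_set (cube m)"
  by (simp add: uniform_cube_def fair_coins_eq_pmf_of_set cube_eq_PiE_dflt)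

lemma pmf_map_uniform_cube: "pmf (map_pmf g (uniform_cube m)) y = push_unif m g y"
proof -
  have "cube m \<noteq> {}" by (simp add: cube_eq_PiE_dflt)
  moreover have "cube m \<inter> g -` {y} = {x \<in> cube m. g x = y}" by auto
  ultimately show ?thesis
    by (simp add: pmf_map uniform_cube_eq_pmf_of_set measure_pmf_of_set finite_cube card_cube
        push_unif_def)
qed

lemma pmf_biased_cube:
  assumes "0 \<le> \<gamma>" "\<gamma> \<le> 1" "y \<in> cube n"
  shows "pmf (biased_cube n \<gamma>) y = biased n \<gamma> y"
  using assms unfolding biased_cube_def biased_def
  by (subst pmf_Pi') (auto simp: cube_def intro!: prod.cong)

lemma measure_diff_le_half_sum_abs_pmf:
  fixes P Q :: "'a pmf"
  assumes "finite C" "set_pmf P \<subseteq> C" "set_pmf Q \<subseteq> C"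
  shows "measure P A - measure Q A \<le> (1/2) * (\<Sum>y\<in>C. \<bar>pmf P y - pmf Q y\<bar>)"
proof -
  have sum_pmf: "measure R B = (\<Sum>y\<in>B \<inter> C. pmf R y)" if "set_pmf R \<subseteq> C" for R :: "'a pmf" and B
    using that assms(1)
    by (metis (no_types, lifting) finite_Int inf.absorb_iff2 inf_assoc inf_commute
        measure_Int_set_pmf measure_measure_pmf_finite)
  have "measure P A - measure Q A \<le> (\<Sum>y\<in>A \<inter> C. \<bar>pmf P y - pmf Q y\<bar>)"
    using sum_pmf[OF assms(2)] sum_pmf[OF assms(3)]
    by (simp add: sum_subtractf[symmetric] sum_mono)
  moreover have "measure P A - measure Q A \<le> (\<Sum>y\<in>(-A) \<inter> C. \<bar>pmf P y - pmf Q y\<bar>)"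
  proof -
    have "measure P A - measure Q A = measure Q (-A) - measure P (-A)"
      using measure_pmf.prob_compl[of A P] measure_pmf.prob_compl[of A Q]
      by (simp add: Compl_eq_Diff_UNIV)
    also have "\<dots> \<le> (\<Sum>y\<in>(-A) \<inter> C. \<bar>pmf P y - pmf Q y\<bar>)"
      using sum_pmf[OF assms(2)] sum_pmf[OF assms(3)]
      by (simp add: sum_subtractf[symmetric] sum_mono)
    finally show ?thesis .
  qed
  moreover have "(\<Sum>y\<in>C. \<bar>pmf P y - pmf Q y\<bar>)
      = (\<Sum>y\<in>A \<inter> C. \<bar>pmf P y - pmf Q y\<bar>) + (\<Sum>y\<in>(-A) \<inter> C. \<bar>pmf P y - pmf Q y\<bar>)"
    using assms(1) by (subst sum.union_disjoint[symmetric]) (auto intro!: sum.cong)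
  ultimately show ?thesis by linarith
qed

lemma tv_dist_nonneg: "0 \<le> tv_dist n P Q"
  by (simp add: tv_dist_def sum_nonneg)

lemma tv_dist_ge_separating_event:
  assumes "0 \<le> \<gamma>" "\<gamma> \<le> 1" "\<forall>x\<in>cube m. g x \<in> cube n"
    and "1 - e \<le> measure (map_pmf g (uniform_cube m)) A" "measure (biased_cube n \<gamma>) A \<le> e"
  shows "1 - 2 * e \<le> tv_dist n (push_unif m g) (biased n \<gamma>)"
proof -
  have "set_pmf (map_pmf g (uniform_cube m)) \<subseteq> cube n"
    using assms(3) set_Pi_pmf_subset_cube unfolding uniform_cube_def by auto
  moreover have "set_pmf (biased_cube n \<gamma>) \<subseteq> cube n"
    unfolding biased_cube_def by (rule set_Pi_pmf_subset_cube)
  ultimately have "measure (map_pmf g (uniform_cube m)) A - measure (biased_cube n \<gamma>) A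
      \<le> (1/2) * (\<Sum>y\<in>cube n. \<bar>pmf (map_pmf g (uniform_cube m)) y - pmf (biased_cube n \<gamma>) y\<bar>)"
    by (intro measure_diff_le_half_sum_abs_pmf finite_cube)
  also have "\<dots> = tv_dist n (push_unif m g) (biased n \<gamma>)"
    using assms(1,2) by (simp add: tv_dist_def pmf_map_uniform_cube pmf_biased_cube)
  finally show ?thesis
    using assms(4,5) by linarith
qed

lemma dep_set_subset: "dep_set m g i \<subseteq> {..<m}"
  by (auto simp: dep_set_def)

lemma finite_dep_set: "finite (dep_set m g i)"
  using dep_set_subset by (rule finite_subset) simp

lemma cube_disagreement_subset:
  "x \<in> cube m \<Longrightarrow> x' \<in> cube m \<Longrightarrow> {j. x j \<noteq> x' j} \<subseteq> {..<m}"
  by (auto simp: cube_def) (meson not_le)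

lemma output_bit_eq_if_agree_on_dep_set:
  assumes "x \<in> cube m" "x' \<in> cube m" "\<forall>j\<in>dep_set m g i. x j = x' j"
  shows "g x i = g x' i"
  using assms
proof (induction "card {j. x j \<noteq> x' j}" arbitrary: x)
  \<comment> \<open>on the Hamming distance: a coordinate where x and x' differ lies outside dep_set,
     so flipping it in x keeps bit i\<close>
  case 0
  have "finite {j. x j \<noteq> x' j}"
    using cube_disagreement_subset[OF "0.prems"(1,2)] by (rule finite_subset) simp
  with "0.hyps" have "x = x'" by (simp add: fun_eq_iff)
  then show ?case by simp
next
  case (Suc k)
  have "{j. x j \<noteq> x' j} \<noteq> {}"
    using Suc.hyps(2) by (metis card.empty nat.simps(3))
  then obtain j where j: "x j \<noteq> x' j" by blast
  have "j < m" using j cube_disagreement_subset[OF Suc.prems(1,2)] by auto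
  have "j \<notin> dep_set m g i" using j Suc.prems(3) by auto
  with \<open>j < m\<close> have "\<forall>z\<in>cube m. g z i = g (z(j := \<not> z j)) i"
    by (simp add: dep_set_def)
  with Suc.prems(1) have flip: "g x i = g (x(j := \<not> x j)) i" by blast
  have "{l. (x(j := \<not> x j)) l \<noteq> x' l} = {l. x l \<noteq> x' l} - {j}"
    using j by auto
  then have "card {l. (x(j := \<not> x j)) l \<noteq> x' l} = card ({l. x l \<noteq> x' l} - {j})"
    by (simp only:)
  also have "\<dots> = card {l. x l \<noteq> x' l} - 1"
    using j by (intro card_Diff_singleton) simp
  also have "\<dots> = k"
    using Suc.hyps(2) by linarith
  finally have card_eq: "card {l. (x(j := \<not> x j)) l \<noteq> x' l} = k" .
  have flipped_cube: "x(j := \<not> x j) \<in> cube m"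
    using Suc.prems(1) \<open>j < m\<close> by (auto simp: cube_def)
  have flipped_agree: "\<forall>l\<in>dep_set m g i. (x(j := \<not> x j)) l = x' l"
    using Suc.prems(3) \<open>j \<notin> dep_set m g i\<close> by simp
  have "g (x(j := \<not> x j)) i = g x' i"
    by (rule Suc.hyps(1)[OF card_eq[symmetric] flipped_cube Suc.prems(2) flipped_agree])
  with flip show ?case by simp
qed

lemma output_bit_restrict_dep_set:
  assumes "x \<in> cube m"
  shows "g (\<lambda>j. j \<in> dep_set m g i \<and> x j) i = g x i"
  using assms dep_set_subset[of m g i]
  by (intro output_bit_eq_if_agree_on_dep_set) (auto simp: cube_def)

lemma measure_output_bit_dyadic:
  "\<exists>k::nat. measure (uniform_cube m) {x. g x i} = real k / 2 ^ card (dep_set m g i)"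
proof -
  define D where "D = dep_set m g i"
  define restr where "restr x = (\<lambda>j. if j \<in> D then x j else False)" for x :: "nat \<Rightarrow> bool"
  have "measure (uniform_cube m) {x. g x i} = measure (uniform_cube m) ({x. g x i} \<inter> cube m)"
    unfolding uniform_cube_def by (rule measure_Pi_pmf_Int_cube[symmetric])
  also have "{x. g x i} \<inter> cube m = {x. g (restr x) i} \<inter> cube m"
  proof -
    have "restr x = (\<lambda>j. j \<in> D \<and> x j)" for x
      by (simp add: restr_def fun_eq_iff)
    then show ?thesis
      using output_bit_restrict_dep_set[of _ m g i] unfolding D_def by auto
  qed
  also have "measure (uniform_cube m) \<dots> = measure (map_pmf restr (uniform_cube m)) {z. g z i}"
    unfolding uniform_cube_def by (simp add: measure_Pi_pmf_Int_cube)
  also have "map_pmf restr (uniform_cube m) = Pi_pmf D False (\<lambda>_. bernoulli_pmf (1/2))"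
    unfolding uniform_cube_def restr_def
    using dep_set_subset[of m g i] by (intro Pi_pmf_subset[symmetric]) (auto simp: D_def)
  finally show ?thesis
    by (auto simp: measure_fair_coins D_def finite_dep_set)
qed

lemma err_le: "err \<gamma> t \<le> \<bar>\<gamma> - real_of_int k / 2 ^ t\<bar>"
  unfolding err_def by (rule cInf_lower) (auto intro!: bdd_belowI[where m=0])

lemma err_nonneg: "0 \<le> err \<gamma> t"
  unfolding err_def by (rule cInf_greatest) auto

lemma err_le_output_bias:
  assumes "card (dep_set m g i) \<le> d"
  shows "err \<gamma> d \<le> \<bar>measure (uniform_cube m) {x. g x i} - \<gamma>\<bar>"
proof -
  obtain k :: nat where k: "measure (uniform_cube m) {x. g x i} = real k / 2 ^ card (dep_set m g i)"
    using measure_output_bit_dyadic by blast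
  define c where "c = card (dep_set m g i)"
  have "(2::real) ^ d = 2 ^ c * 2 ^ (d - c)"
    using assms by (simp add: c_def flip: power_add)
  then have "measure (uniform_cube m) {x. g x i} = real_of_int (int (k * 2 ^ (d - c))) / 2 ^ d"
    by (simp add: k c_def)
  moreover have "err \<gamma> d \<le> \<bar>\<gamma> - real_of_int (int (k * 2 ^ (d - c))) / 2 ^ d\<bar>"
    by (rule err_le)
  ultimately show ?thesis
    by (simp add: abs_minus_commute)
qed

lemma Hoeffding_ineq_pmf:
  fixes M :: "'a pmf" and X :: "'i \<Rightarrow> 'a \<Rightarrow> real"
  assumes "prob_space.indep_vars (measure_pmf M) (\<lambda>_. borel) X S"
    and "finite S" "S \<noteq> {}" "\<And>i x. i \<in> S \<Longrightarrow> X i x \<in> {0..1}" "0 \<le> t"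
  shows "measure M {x. (\<Sum>i\<in>S. measure_pmf.expectation M (X i)) + t \<le> (\<Sum>i\<in>S. X i x)}
           \<le> exp (-2 * t\<^sup>2 / card S)"
    and "measure M {x. (\<Sum>i\<in>S. X i x) \<le> (\<Sum>i\<in>S. measure_pmf.expectation M (X i)) - t}
           \<le> exp (-2 * t\<^sup>2 / card S)"
proof -
  interpret Hoeffding_ineq "measure_pmf M" S X "\<lambda>_. 0" "\<lambda>_. 1"
    "\<Sum>i\<in>S. measure_pmf.expectation M (X i)"
    by unfold_locales (use assms in auto)
  have card_S: "(\<Sum>i\<in>S. ((1::real) - 0)\<^sup>2) = card S" by simp
  then have "(\<Sum>i\<in>S. ((1::real) - 0)\<^sup>2) > 0"
    using assms(2,3) by (simp add: card_gt_0_iff)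
  from Hoeffding_ineq_ge[OF assms(5) this] Hoeffding_ineq_le[OF assms(5) this]
  show "measure M {x. (\<Sum>i\<in>S. measure_pmf.expectation M (X i)) + t \<le> (\<Sum>i\<in>S. X i x)}
          \<le> exp (-2 * t\<^sup>2 / card S)"
    and "measure M {x. (\<Sum>i\<in>S. X i x) \<le> (\<Sum>i\<in>S. measure_pmf.expectation M (X i)) - t}
          \<le> exp (-2 * t\<^sup>2 / card S)"
    by (simp_all only: card_S) simp_all
qed

lemma indep_vars_biased_coordinates:
  assumes "S \<subseteq> {..<n}"
  shows "prob_space.indep_vars (measure_pmf (biased_cube n \<gamma>)) (\<lambda>_. borel)
           (\<lambda>i y. h i (y i) :: real) S"
proof -
  have "prob_space.indep_vars (measure_pmf (biased_cube n \<gamma>)) (\<lambda>_. count_space UNIV) (\<lambda>i y. y i) S"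
    unfolding biased_cube_def
    by (rule prob_space.indep_vars_subset[OF measure_pmf.prob_space_axioms indep_vars_Pi_pmf])
       (use assms in auto)
  then show ?thesis
    by (rule prob_space.indep_vars_compose2[OF measure_pmf.prob_space_axioms]) simp
qed

text \<open>Off the cube g is unconstrained, so bit i of g x need not be a function of the
  coordinates in dep_set; its restriction below is, and it agrees with g x on the support.\<close>

lemma indep_vars_output_bits:
  assumes "disjoint_family_on (dep_set m g) S"
  shows "prob_space.indep_vars (measure_pmf (uniform_cube m)) (\<lambda>_. borel)
           (\<lambda>i x. h i (g (\<lambda>j. j \<in> dep_set m g i \<and> x j) i) :: real) S"
proof -
  have "prob_space.indep_vars (measure_pmf (uniform_cube m)) (\<lambda>_. count_space UNIV) (\<lambda>j x. x j) {..<m}"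
    unfolding uniform_cube_def by (rule indep_vars_Pi_pmf) simp
  then have "prob_space.indep_vars (measure_pmf (uniform_cube m))
      (\<lambda>i. PiM (dep_set m g i) (\<lambda>_. count_space UNIV)) (\<lambda>i x. restrict x (dep_set m g i)) S"
    using assms dep_set_subset
    by (intro prob_space.indep_vars_restrict[OF measure_pmf.prob_space_axioms, where X="\<lambda>j x. x j",
          simplified]) auto
  then have "prob_space.indep_vars (measure_pmf (uniform_cube m)) (\<lambda>_. borel)
      (\<lambda>i x. h i (g (\<lambda>j. j \<in> dep_set m g i \<and> restrict x (dep_set m g i) j) i)) S"
    by (rule prob_space.indep_vars_compose2[OF measure_pmf.prob_space_axioms])
       (simp add: count_space_PiM_finite finite_dep_set)
  then show ?thesis
    by (simp cong: conj_cong)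
qed

definition matches :: "(nat \<Rightarrow> bool) \<Rightarrow> nat set \<Rightarrow> (nat \<Rightarrow> bool) \<Rightarrow> real" where
  "matches \<sigma> S y = (\<Sum>i\<in>S. if y i = \<sigma> i then 1 else 0)"

lemma expectation_indicator_pmf:
  "measure_pmf.expectation M (\<lambda>x. if P x then 1 else 0 :: real) = measure M {x. P x}"
proof -
  have "(\<lambda>x. if P x then 1 else 0 :: real) = indicator {x. P x}"
    by (simp add: fun_eq_iff)
  then show ?thesis by simp
qed

lemma biased_matches_upper_tail:
  assumes "0 \<le> \<gamma>" "\<gamma> \<le> 1" "S \<subseteq> {..<n}" "S \<noteq> {}" "0 \<le> t"
  shows "measure (biased_cube n \<gamma>) {y. (\<Sum>i\<in>S. if \<sigma> i then \<gamma> else 1 - \<gamma>) + t \<le> matches \<sigma> S y}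
           \<le> exp (-2 * t\<^sup>2 / card S)"
proof -
  let ?X = "\<lambda>i y. if y i = \<sigma> i then 1 else 0 :: real"
  let ?E = "\<lambda>i. measure_pmf.expectation (biased_cube n \<gamma>) (?X i)"
  have "?E i = (if \<sigma> i then \<gamma> else 1 - \<gamma>)" if "i \<in> S" for i
  proof -
    have coordinate: "map_pmf (\<lambda>y. y i) (biased_cube n \<gamma>) = bernoulli_pmf \<gamma>"
      unfolding biased_cube_def using that assms(3) by (subst Pi_pmf_component) auto
    have "measure (bernoulli_pmf \<gamma>) {\<sigma> i} = measure (biased_cube n \<gamma>) ((\<lambda>y. y i) -` {\<sigma> i})"
      unfolding coordinate[symmetric] by (rule measure_map_pmf)
    also have "(\<lambda>y. y i) -` {\<sigma> i} = {y. y i = \<sigma> i}" by auto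
    finally show ?thesis
      using assms(1,2) by (cases "\<sigma> i") (simp_all add: expectation_indicator_pmf measure_pmf_single)
  qed
  then have "(\<Sum>i\<in>S. if \<sigma> i then \<gamma> else 1 - \<gamma>) = (\<Sum>i\<in>S. ?E i)"
    by simp
  then have "measure (biased_cube n \<gamma>) {y. (\<Sum>i\<in>S. if \<sigma> i then \<gamma> else 1 - \<gamma>) + t \<le> matches \<sigma> S y}
      = measure (biased_cube n \<gamma>) {y. (\<Sum>i\<in>S. ?E i) + t \<le> (\<Sum>i\<in>S. ?X i y)}"
    by (simp only: matches_def)
  also have "\<dots> \<le> exp (-2 * t\<^sup>2 / card S)"
    using assms(3-5) finite_subset[OF assms(3)]
    by (intro Hoeffding_ineq_pmf(1) indep_vars_biased_coordinates[where h="\<lambda>i b. if b = \<sigma> i then 1 else 0"])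
       auto
  finally show ?thesis .
qed

lemma uniform_matches_lower_tail:
  assumes "disjoint_family_on (dep_set m g) S" "finite S" "S \<noteq> {}" "0 \<le> t"
  shows "measure (uniform_cube m)
           {x. matches \<sigma> S (g x) \<le> (\<Sum>i\<in>S. measure (uniform_cube m) {x. g x i = \<sigma> i}) - t}
           \<le> exp (-2 * t\<^sup>2 / card S)"
proof -
  let ?Y = "\<lambda>i x. if g (\<lambda>j. j \<in> dep_set m g i \<and> x j) i = \<sigma> i then 1 else 0 :: real"
  let ?E = "\<lambda>i. measure_pmf.expectation (uniform_cube m) (?Y i)"
  have "measure (uniform_cube m) {x. g x i = \<sigma> i} = ?E i" for i
  proof -
    have "measure (uniform_cube m) {x. g x i = \<sigma> i}
            = measure (uniform_cube m) ({x. g x i = \<sigma> i} \<inter> cube m)"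
      unfolding uniform_cube_def by (rule measure_Pi_pmf_Int_cube[symmetric])
    also have "{x. g x i = \<sigma> i} \<inter> cube m
                 = {x. g (\<lambda>j. j \<in> dep_set m g i \<and> x j) i = \<sigma> i} \<inter> cube m"
      using output_bit_restrict_dep_set[of _ m g i] by auto
    also have "measure (uniform_cube m) \<dots>
                 = measure (uniform_cube m) {x. g (\<lambda>j. j \<in> dep_set m g i \<and> x j) i = \<sigma> i}"
      unfolding uniform_cube_def by (rule measure_Pi_pmf_Int_cube)
    finally show ?thesis
      by (simp only: expectation_indicator_pmf)
  qed
  then have "measure (uniform_cube m)
      {x. matches \<sigma> S (g x) \<le> (\<Sum>i\<in>S. measure (uniform_cube m) {x. g x i = \<sigma> i}) - t}
      = measure (uniform_cube m) ({x. matches \<sigma> S (g x) \<le> (\<Sum>i\<in>S. ?E i) - t} \<inter> cube m)"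
    unfolding uniform_cube_def by (simp add: measure_Pi_pmf_Int_cube)
  also have "{x. matches \<sigma> S (g x) \<le> (\<Sum>i\<in>S. ?E i) - t} \<inter> cube m
               = {x. (\<Sum>i\<in>S. ?Y i x) \<le> (\<Sum>i\<in>S. ?E i) - t} \<inter> cube m"
    using output_bit_restrict_dep_set[of _ m g] unfolding matches_def by (auto cong: sum.cong)
  also have "measure (uniform_cube m) \<dots> = measure (uniform_cube m) {x. (\<Sum>i\<in>S. ?Y i x) \<le> (\<Sum>i\<in>S. ?E i) - t}"
    unfolding uniform_cube_def by (rule measure_Pi_pmf_Int_cube)
  also have "\<dots> \<le> exp (-2 * t\<^sup>2 / card S)"
    by (rule Hoeffding_ineq_pmf(2)[OF indep_vars_output_bits[OF assms(1)]]) (use assms in auto)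
  finally show ?thesis .
qed

lemma output_agreement_gap:
  fixes \<gamma> :: real
  assumes "card (dep_set m g i) \<le> d"
  defines "b \<equiv> \<gamma> \<le> measure (uniform_cube m) {x. g x i}"
  shows "(if b then \<gamma> else 1 - \<gamma>) + err \<gamma> d \<le> measure (uniform_cube m) {x. g x i = b}"
proof -
  have "err \<gamma> d \<le> \<bar>measure (uniform_cube m) {x. g x i} - \<gamma>\<bar>"
    using assms(1) by (rule err_le_output_bias)
  moreover have "measure (uniform_cube m) {x. \<not> g x i} = 1 - measure (uniform_cube m) {x. g x i}"
    using measure_pmf.prob_compl[of "{x. g x i}" "uniform_cube m"] by (simp add: Compl_eq_Diff_UNIV[symmetric] Collect_neg_eq)
  ultimately show ?thesis
    by (cases b) (auto simp: b_def)
qed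

lemma pushforward_matches_lower_tail:
  fixes \<gamma> :: real
  assumes "disjoint_family_on (dep_set m g) S" "finite S" "S \<noteq> {}"
    and "\<forall>i\<in>S. card (dep_set m g i) \<le> d" "0 \<le> t" "2 * t \<le> real (card S) * err \<gamma> d"
  defines "\<sigma> \<equiv> \<lambda>i. \<gamma> \<le> measure (uniform_cube m) {x. g x i}"
  shows "1 - exp (-2 * t\<^sup>2 / card S) \<le> measure (map_pmf g (uniform_cube m))
           {y. (\<Sum>i\<in>S. if \<sigma> i then \<gamma> else 1 - \<gamma>) + t \<le> matches \<sigma> S y}"
proof -
  let ?A = "{y. (\<Sum>i\<in>S. if \<sigma> i then \<gamma> else 1 - \<gamma>) + t \<le> matches \<sigma> S y}"
  have "(\<Sum>i\<in>S. if \<sigma> i then \<gamma> else 1 - \<gamma>) + 2 * t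
          \<le> (\<Sum>i\<in>S. (if \<sigma> i then \<gamma> else 1 - \<gamma>) + err \<gamma> d)"
    using assms(6) by (simp add: sum.distrib)
  also have "\<dots> \<le> (\<Sum>i\<in>S. measure (uniform_cube m) {x. g x i = \<sigma> i})"
    using assms(4) unfolding \<sigma>_def by (intro sum_mono output_agreement_gap) auto
  finally have "measure (map_pmf g (uniform_cube m)) (- ?A)
      \<le> measure (uniform_cube m)
          {x. matches \<sigma> S (g x) \<le> (\<Sum>i\<in>S. measure (uniform_cube m) {x. g x i = \<sigma> i}) - t}"
    by (auto intro!: measure_pmf.finite_measure_mono)
  also have "\<dots> \<le> exp (-2 * t\<^sup>2 / card S)"
    using assms(1-3,5) by (rule uniform_matches_lower_tail)
  finally show ?thesis
    using measure_pmf.prob_compl[of ?A "map_pmf g (uniform_cube m)"] by (simp add: Compl_eq_Diff_UNIV)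
qed

theorem mainTheorem3:
  fixes m n d r :: nat and \<gamma> :: real
    and g :: "(nat \<Rightarrow> bool) \<Rightarrow> (nat \<Rightarrow> bool)"
  assumes "0 \<le> \<gamma>" and "\<gamma> \<le> 1"
    and "\<forall>x\<in>cube m. g x \<in> cube n"
    and "dr_local m n g d r"
  shows "tv_dist n (push_unif m g) (biased n \<gamma>)
           \<ge> 1 - 2 * exp (- ((err \<gamma> d)\<^sup>2 * real r / 2))"
proof -
  obtain S where S: "S \<subseteq> {..<n}" "card S = r" "disjoint_family_on (dep_set m g) S"
    and local: "\<forall>i\<in>S. card (dep_set m g i) \<le> d"
    using assms(4) unfolding dr_local_def d_local_def disjoint_family_on_def by blast
  show ?thesis
  proof (cases "S = {}")
    case True
    then show ?thesis using S(2) tv_dist_nonneg[of n "push_unif m g" "biased n \<gamma>"] by simp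
  next
    case False
    have "finite S" using S(1) by (rule finite_subset) simp
    define \<sigma> where "\<sigma> i = (\<gamma> \<le> measure (uniform_cube m) {x. g x i})" for i
    define t where "t = r * err \<gamma> d / 2"
    define A where "A = {y. (\<Sum>i\<in>S. if \<sigma> i then \<gamma> else 1 - \<gamma>) + t \<le> matches \<sigma> S y}"
    have "0 \<le> t" by (simp add: t_def err_nonneg)
    have "1 - exp (-2 * t\<^sup>2 / card S) \<le> measure (map_pmf g (uniform_cube m)) A"
      unfolding A_def \<sigma>_def using S(3) \<open>finite S\<close> False local \<open>0 \<le> t\<close>
      by (rule pushforward_matches_lower_tail) (simp add: t_def S(2))
    moreover have "measure (biased_cube n \<gamma>) A \<le> exp (-2 * t\<^sup>2 / card S)"
      unfolding A_def using assms(1,2) S(1) False \<open>0 \<le> t\<close> by (rule biased_matches_upper_tail)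
    moreover have "exp (-2 * t\<^sup>2 / card S) = exp (- ((err \<gamma> d)\<^sup>2 * real r / 2))"
      using S(2) False \<open>finite S\<close> by (simp add: t_def power2_eq_square field_simps)
    ultimately show ?thesis
      using tv_dist_ge_separating_event[OF assms(1-3)] by metis
  qed
qed

end
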